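(* Let $(g_1,f_1,\lambda_1)$ and $(g_2,f_2,\lambda_2)$ be spectral triples for $(T,p,q)$, $1<p,q<\infty$. Then for every $\varepsilon>0$, \[ P(Tf_1-\varepsilon Tf_2)\le P\Big(Tf_1-\varepsilon^{(p-1)/(q-1)}(\lambda_2/\lambda_1)^{1/(q-1)}\,Tf_2\Big). \]
   Context: $-\infty<a<b<\infty$, $I=[a,b]$, $1<p,q<\infty$, $1/p'=1-1/p$. The functions $u,v$ are positive on $I$ with $u\in L_{p'}(I)$, $v\in L_q(I)$. $T:L_p(I)\to L_q(I)$ is $(Tf)(x)=v(x)\int_a^x f(t)u(t)\,dt$ and $T^*$ is $(T^*h)(x)=u(x)\int_x^b v(y)h(y)\,dy$. For $s>1$ and real $t$, $t_{(s)}:=|t|^{s-1}\operatorname{sgn}(t)$, and $h_{(s)}$ denotes the function $x\mapsto (h(x))_{(s)}$. A spectral triple is $(g,f,\lambda)$ with $f\in L_p(I)$, $\|f\|_p=1$, $\lambda$ a real number, satisfying $g=Tf$ and $f_{(p)}=\lambda\, T^*(g_{(q)})$ on $I$. For a continuous function $h$ on $I$, $P(h)$ is the number of sign changes of $h$ on $(a,b)$. *)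

theory Defs
  imports "HOL-Analysis.Analysis"
begin

definition in_Lp :: "real \<Rightarrow> real \<Rightarrow> real \<Rightarrow> (real \<Rightarrow> real) \<Rightarrow> bool" where
  "in_Lp s a b f \<longleftrightarrow> set_borel_measurable lborel {a..b} f \<and>
     set_integrable lborel {a..b} (\<lambda>x. \<bar>f x\<bar> powr s)"

definition Lp_norm :: "real \<Rightarrow> real \<Rightarrow> real \<Rightarrow> (real \<Rightarrow> real) \<Rightarrow> real" where
  "Lp_norm s a b f = (LINT x:{a..b}|lborel. \<bar>f x\<bar> powr s) powr (1 / s)"

definition Hop :: "real \<Rightarrow> (real \<Rightarrow> real) \<Rightarrow> (real \<Rightarrow> real) \<Rightarrow> (real \<Rightarrow> real) \<Rightarrow> real \<Rightarrow> real" where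
  "Hop a u v f x = v x * (LINT t:{a..x}|lborel. f t * u t)"

definition Hadj :: "real \<Rightarrow> (real \<Rightarrow> real) \<Rightarrow> (real \<Rightarrow> real) \<Rightarrow> (real \<Rightarrow> real) \<Rightarrow> real \<Rightarrow> real" where
  "Hadj b u v h x = u x * (LINT y:{x..b}|lborel. v y * h y)"

definition spow :: "real \<Rightarrow> real \<Rightarrow> real" where
  "spow s t = \<bar>t\<bar> powr (s - 1) * sgn t"

definition spectral_triple ::
  "real \<Rightarrow> real \<Rightarrow> (real \<Rightarrow> real) \<Rightarrow> (real \<Rightarrow> real) \<Rightarrow> real \<Rightarrow> real \<Rightarrow>
   (real \<Rightarrow> real) \<Rightarrow> (real \<Rightarrow> real) \<Rightarrow> real \<Rightarrow> bool" where
  "spectral_triple a b u v p q g f lam \<longleftrightarrow>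
     in_Lp p a b f \<and> Lp_norm p a b f = 1 \<and>
     (\<forall>x\<in>{a..b}. g x = Hop a u v f x) \<and>
     (AE x in lborel. x \<in> {a..b} \<longrightarrow>
        spow p (f x) = lam * Hadj b u v (\<lambda>y. spow q (g y)) x)"

definition sign_changes :: "real \<Rightarrow> real \<Rightarrow> (real \<Rightarrow> real) \<Rightarrow> enat" where
  "sign_changes a b h = Sup {enat n | n. \<exists>xs :: nat \<Rightarrow> real.
      (\<forall>i\<le>n. a < xs i \<and> xs i < b) \<and>
      (\<forall>i<n. xs i < xs (Suc i) \<and> h (xs i) * h (xs (Suc i)) < 0)}"

end

theory Submission
  imports Defs
begin

(* Write F_i(x) = int_a^x f_i u, so that T f_i = v F_i, and G_i(x) = int_x^b v (T f_i)_(q),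
   so that T*((T f_i)_(q)) = u G_i and the spectral relation reads (f_i)_(p) = lam_i u G_i.
   (1) Since v > 0, T f1 - eps T f2 has the sign of the primitive of phi = (f1 - eps f2) u,
       and phi has the sign of lam1 G1 - eps^(p-1) lam2 G2, because t -> t_(p) is strictly
       increasing and positively homogeneous of degree p-1.
   (2) A primitive int_a^x phi vanishing at a changes sign at most as often as any H with
       sgn phi = sgn H a.e.: between consecutive sign changes of the primitive, phi (hence H)
       must take the sign of the later value.  Dually for tail integrals int_x^b psi.
   (3) lam1 G1 - c G2 is the tail integral of psi = lam1 v (T f1)_(q) - c v (T f2)_(q), whose
       sign is that of T f1 - (c/lam1)^(1/(q-1)) T f2 by the same monotonicity argument.
   Chaining (1)-(3) with c = eps^(p-1) lam2 gives the theorem; lam1 > 0 follows from the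
   energy identity 1 = int |f|^p = lam int |T f|^q, proved by Fubini. *)

subsection \<open>The signed power \<open>t\<^sub>(\<^sub>s\<^sub>)\<close>\<close>

text \<open>For \<open>s > 1\<close> the signed power is strictly increasing; this is what lets signs of
  differences pass through the spectral relation.\<close>
lemma spow_strict_mono:
  assumes s: "1 < s" and xy: "x < y"
  shows "spow s x < spow s y"
proof -
  consider "0 \<le> x" | "x < 0 \<and> y \<le> 0" | "x < 0 \<and> 0 < y" using xy by linarith
  then show ?thesis
  proof cases
    case 1
    then have "\<bar>x\<bar> powr (s-1) < \<bar>y\<bar> powr (s-1)" using xy s by (intro powr_less_mono2) auto
    then show ?thesis using 1 xy by (auto simp: spow_def sgn_if)
  next
    case 2
    then have "\<bar>y\<bar> powr (s-1) < \<bar>x\<bar> powr (s-1)" using xy s by (intro powr_less_mono2) auto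
    then show ?thesis using 2 xy by (auto simp: spow_def sgn_if)
  next
    case 3
    have "0 < y powr (s-1)" using 3 by simp
    moreover have "0 \<le> (- x) powr (s-1)" by simp
    ultimately have "- ((- x) powr (s - 1)) < y powr (s - 1)" by linarith
    then show ?thesis using 3 by (auto simp: spow_def sgn_if)
  qed
qed

lemma sgn_spow_diff:
  assumes "1 < s"
  shows "sgn (spow s x - spow s y) = sgn (x - y)"
  using spow_strict_mono[OF assms, of x y] spow_strict_mono[OF assms, of y x]
  by (cases "x < y"; cases "y < x") (auto simp: sgn_if)

lemma spow_scale:
  assumes "0 < c"
  shows "spow s (c * x) = c powr (s - 1) * spow s x"
  using assms by (simp add: spow_def abs_mult powr_mult sgn_mult)

lemma spow_mult_self:
  assumes "1 < s"
  shows "x * spow s x = \<bar>x\<bar> powr s"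
proof -
  have "x * spow s x = \<bar>x\<bar> * \<bar>x\<bar> powr (s - 1)"
    by (auto simp: spow_def sgn_if)
  also have "\<dots> = \<bar>x\<bar> powr s"
    by (cases "x = 0") (use assms in \<open>auto simp: powr_diff\<close>)
  finally show ?thesis .
qed

lemma abs_spow: "\<bar>spow s x\<bar> = \<bar>x\<bar> powr (s - 1)"
  by (auto simp: spow_def sgn_if)

lemma spow_measurable [measurable]:
  fixes f :: "'a \<Rightarrow> real"
  assumes [measurable]: "f \<in> borel_measurable M"
  shows "(\<lambda>x. spow s (f x)) \<in> borel_measurable M"
  unfolding spow_def by measurable

text \<open>The two sign identities behind steps (1) and (3) of the proof: a difference
  \<open>F\<^sub>1 - \<epsilon> F\<^sub>2\<close> has the sign of the difference of the signed powers, which the spectral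
  relation rewrites.\<close>
lemma sgn_spectral_difference:
  fixes U F1 F2 G1 G2 L1 L2 eps p :: real
  assumes U: "0 < U" and eps: "0 < eps" and p: "1 < p"
    and rel1: "spow p F1 = L1 * (U * G1)" and rel2: "spow p F2 = L2 * (U * G2)"
  shows "sgn (F1 * U - eps * (F2 * U)) = sgn (L1 * G1 - eps powr (p - 1) * L2 * G2)"
proof -
  have "sgn (F1 * U - eps * (F2 * U)) = sgn (U * (F1 - eps * F2))"
    by (simp add: algebra_simps)
  also have "\<dots> = sgn (F1 - eps * F2)"
    using U by (simp add: sgn_mult)
  also have "\<dots> = sgn (spow p F1 - spow p (eps * F2))"
    by (rule sgn_spow_diff[OF p, symmetric])
  also have "spow p F1 - spow p (eps * F2) = U * (L1 * G1 - eps powr (p - 1) * L2 * G2)"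
    using rel1 rel2 spow_scale[OF eps, of p F2] by (simp add: algebra_simps)
  also have "sgn \<dots> = sgn (L1 * G1 - eps powr (p - 1) * L2 * G2)"
    using U by (simp add: sgn_mult)
  finally show ?thesis .
qed

lemma sgn_dual_difference:
  fixes V A B L1 c q d :: real
  assumes V: "0 < V" and L1: "0 < L1" and c: "0 < c" and q: "1 < q"
    and d: "d = (c / L1) powr (1 / (q - 1))"
  shows "sgn (L1 * (V * spow q (V * A)) - c * (V * spow q (V * B))) = sgn (V * A - d * (V * B))"
proof -
  have d_pos: "0 < d" using c L1 d by simp
  have "d powr (q - 1) = c / L1"
    using c L1 q d by (simp add: powr_powr)
  then have "(c / L1) * spow q (V * B) = spow q (d * (V * B))"
    using spow_scale[OF d_pos, of q "V * B"] by simp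
  moreover have "L1 * (V * spow q (V * A)) - c * (V * spow q (V * B))
      = (L1 * V) * (spow q (V * A) - (c / L1) * spow q (V * B))"
    using L1 by (simp add: field_simps)
  ultimately have "sgn (L1 * (V * spow q (V * A)) - c * (V * spow q (V * B)))
      = sgn (spow q (V * A) - spow q (d * (V * B)))"
    using V L1 by (simp add: sgn_mult)
  also have "\<dots> = sgn (V * A - d * (V * B))" by (rule sgn_spow_diff[OF q])
  finally show ?thesis .
qed

text \<open>Young's inequality in the crude form \<open>|xy| \<le> |x|\<^sup>p + |y|\<^sup>p\<^sup>'\<close>, enough for \<open>f u \<in> L\<^sub>1\<close>.\<close>
lemma young_crude:
  fixes x y p :: real
  assumes p: "1 < p"
  shows "\<bar>x * y\<bar> \<le> \<bar>x\<bar> powr p + \<bar>y\<bar> powr (p / (p - 1))"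
proof (cases "\<bar>y\<bar> \<le> \<bar>x\<bar> powr (p - 1)")
  case True
  have "\<bar>x * y\<bar> \<le> \<bar>x\<bar> * \<bar>x\<bar> powr (p - 1)"
    unfolding abs_mult by (rule mult_left_mono) (use True in auto)
  also have "\<dots> = \<bar>x\<bar> powr p"
    by (cases "x = 0") (use p in \<open>auto simp: powr_diff\<close>)
  moreover have "0 \<le> \<bar>y\<bar> powr (p / (p - 1))" by simp
  ultimately show ?thesis by linarith
next
  case False
  then have y0: "y \<noteq> 0" by auto
  have "\<bar>x\<bar> = (\<bar>x\<bar> powr (p - 1)) powr (1 / (p - 1))"
    using p by (simp add: powr_powr)
  also have "\<dots> \<le> \<bar>y\<bar> powr (1 / (p - 1))"
    using False p by (intro powr_mono2) auto
  finally have "\<bar>x * y\<bar> \<le> \<bar>y\<bar> powr (1 / (p - 1)) * \<bar>y\<bar>"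
    by (simp add: abs_mult mult_right_mono)
  also have "\<dots> = \<bar>y\<bar> powr (p / (p - 1))"
  proof -
    have "p / (p - 1) = 1 / (p - 1) + 1" using p by (simp add: field_simps)
    then show ?thesis using y0 by (simp add: powr_add)
  qed
  moreover have "0 \<le> \<bar>x\<bar> powr p" by simp
  ultimately show ?thesis by linarith
qed

subsection \<open>Comparing numbers of sign changes\<close>

definition alternating_points :: "real \<Rightarrow> real \<Rightarrow> (real \<Rightarrow> real) \<Rightarrow> nat \<Rightarrow> (nat \<Rightarrow> real) \<Rightarrow> bool" where
  "alternating_points a b h n xs \<longleftrightarrow> (\<forall>i\<le>n. a < xs i \<and> xs i < b) \<and>
      (\<forall>i<n. xs i < xs (Suc i) \<and> h (xs i) * h (xs (Suc i)) < 0)"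

lemma sign_changes_le_by_witnesses:
  assumes "\<And>n xs. alternating_points a b h1 n xs \<Longrightarrow> \<exists>ys. alternating_points a b h2 n ys"
  shows "sign_changes a b h1 \<le> sign_changes a b h2"
  unfolding sign_changes_def alternating_points_def[symmetric]
  by (rule Sup_subset_mono) (use assms in blast)

lemma alternating_points_move:
  assumes W: "alternating_points a b F n xs"
    and range: "\<And>i. i \<le> n \<Longrightarrow> a < ys i \<and> ys i < b"
    and incr: "\<And>i. i < n \<Longrightarrow> ys i < ys (Suc i)"
    and same_sgn: "\<And>i. i \<le> n \<Longrightarrow> sgn (K (ys i)) = sgn (F (xs i))"
  shows "alternating_points a b K n ys"
proof -
  have "K (ys i) * K (ys (Suc i)) < 0" if i: "i < n" for i
  proof -
    have "F (xs i) * F (xs (Suc i)) < 0" using W i by (auto simp: alternating_points_def)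
    then have "sgn (F (xs i) * F (xs (Suc i))) = -1" by (simp only: sgn_1_neg)
    then have "sgn (K (ys i) * K (ys (Suc i))) = -1"
      using same_sgn[of i] same_sgn[of "Suc i"] i by (simp only: sgn_mult)
    then show ?thesis by (simp only: sgn_1_neg)
  qed
  then show ?thesis using range incr by (auto simp: alternating_points_def)
qed

lemma sign_changes_sgn_cong:
  assumes "\<And>x. a < x \<Longrightarrow> x < b \<Longrightarrow> sgn (h1 x) = sgn (h2 x)"
  shows "sign_changes a b h1 = sign_changes a b h2"
proof -
  have "sign_changes a b k1 \<le> sign_changes a b k2"
    if "\<And>x. a < x \<Longrightarrow> x < b \<Longrightarrow> sgn (k1 x) = sgn (k2 x)" for k1 k2 :: "real \<Rightarrow> real"
  proof (rule sign_changes_le_by_witnesses)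
    fix n xs assume W: "alternating_points a b k1 n xs"
    then have "alternating_points a b k2 n xs"
      by (rule alternating_points_move) (use W that in \<open>auto simp: alternating_points_def\<close>)
    then show "\<exists>ys. alternating_points a b k2 n ys" by blast
  qed
  then show ?thesis using assms by (metis order_antisym)
qed

lemma sgn_eq_of_pos_mult: "0 < s * t \<Longrightarrow> sgn t = sgn (s::real)"
  by (auto simp: sgn_if zero_less_mult_iff)

lemma pos_increment_of_sign_change: "s * t \<le> 0 \<Longrightarrow> t \<noteq> 0 \<Longrightarrow> 0 < t * (t - (s::real))"
  by (simp add: algebra_simps) (metis diff_gt_0_iff_gt not_real_square_gt_zero order_le_less_trans)

text \<open>Each sign change point \<open>x\<^sub>i\<close> of \<open>F\<close> is compared with its left
  neighbour (or with \<open>a\<close>).\<close>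
lemma sign_changes_le_left_anchored:
  fixes F K :: "real \<Rightarrow> real"
  assumes F_a: "F a = 0"
    and detect: "\<And>x y s. a \<le> x \<Longrightarrow> x < y \<Longrightarrow> y < b \<Longrightarrow> 0 < s * (F y - F x) \<Longrightarrow>
                   \<exists>t\<in>{x<..<y}. 0 < s * K t"
  shows "sign_changes a b F \<le> sign_changes a b K"
proof (rule sign_changes_le_by_witnesses)
  fix n xs assume W: "alternating_points a b F n xs"
  show "\<exists>ys. alternating_points a b K n ys"
  proof (cases "n = 0")
    case True
    then show ?thesis using W by (intro exI[of _ xs]) (auto simp: alternating_points_def)
  next
    case False
    define c where "c i = (if i = 0 then a else xs (i - 1))" for i
    have rng: "a < xs i \<and> xs i < b" if "i \<le> n" for i
      using W that by (auto simp: alternating_points_def)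
    have alt: "xs i < xs (Suc i) \<and> F (xs i) * F (xs (Suc i)) < 0" if "i < n" for i
      using W that by (auto simp: alternating_points_def)
    have c: "a \<le> c i \<and> c i < xs i \<and> F (c i) * F (xs i) \<le> 0 \<and> F (xs i) \<noteq> 0" if i: "i \<le> n" for i
    proof (cases i)
      case 0
      then show ?thesis using rng[OF i] alt[of 0] False F_a by (auto simp: c_def)
    next
      case (Suc j)
      then show ?thesis using rng[of j] alt[of j] i by (auto simp: c_def)
    qed
    have "\<forall>i. \<exists>t. i \<le> n \<longrightarrow> t \<in> {c i<..<xs i} \<and> 0 < F (xs i) * K t"
      using detect c rng pos_increment_of_sign_change by (metis mult.commute)
    then obtain ys where ys: "\<And>i. i \<le> n \<Longrightarrow> ys i \<in> {c i<..<xs i} \<and> 0 < F (xs i) * K (ys i)"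
      by metis
    show ?thesis
    proof (intro exI alternating_points_move[OF W])
      show "a < ys i \<and> ys i < b" if "i \<le> n" for i using ys[OF that] c[OF that] rng[OF that] by auto
      show "ys i < ys (Suc i)" if "i < n" for i using ys[of i] ys[of "Suc i"] that by (auto simp: c_def)
      show "sgn (K (ys i)) = sgn (F (xs i))" if "i \<le> n" for i
        using ys[OF that] by (simp add: sgn_eq_of_pos_mult)
    qed
  qed
qed

text \<open>Mirror image: \<open>F(b) = 0\<close>, and each \<open>x\<^sub>i\<close> is compared with its right neighbour (or \<open>b\<close>).\<close>
lemma sign_changes_le_right_anchored:
  fixes F K :: "real \<Rightarrow> real"
  assumes F_b: "F b = 0"
    and detect: "\<And>x y s. a < x \<Longrightarrow> x < y \<Longrightarrow> y \<le> b \<Longrightarrow> 0 < s * (F x - F y) \<Longrightarrow>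
                   \<exists>t\<in>{x<..<y}. 0 < s * K t"
  shows "sign_changes a b F \<le> sign_changes a b K"
proof (rule sign_changes_le_by_witnesses)
  fix n xs assume W: "alternating_points a b F n xs"
  show "\<exists>ys. alternating_points a b K n ys"
  proof (cases "n = 0")
    case True
    then show ?thesis using W by (intro exI[of _ xs]) (auto simp: alternating_points_def)
  next
    case False
    define d where "d i = (if i = n then b else xs (Suc i))" for i
    have rng: "a < xs i \<and> xs i < b" if "i \<le> n" for i
      using W that by (auto simp: alternating_points_def)
    have alt: "xs i < xs (Suc i) \<and> F (xs i) * F (xs (Suc i)) < 0" if "i < n" for i
      using W that by (auto simp: alternating_points_def)
    have d: "xs i < d i \<and> d i \<le> b \<and> F (d i) * F (xs i) \<le> 0 \<and> F (xs i) \<noteq> 0" if i: "i \<le> n" for i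
    proof (cases "i = n")
      case True
      obtain j where j: "n = Suc j" using False by (cases n) auto
      show ?thesis using True rng[OF i] alt[of j] j F_b by (auto simp: d_def)
    next
      case False
      then show ?thesis using rng[of "Suc i"] alt[of i] i by (auto simp: d_def mult.commute)
    qed
    have "\<forall>i. \<exists>t. i \<le> n \<longrightarrow> t \<in> {xs i<..<d i} \<and> 0 < F (xs i) * K t"
      using detect d rng pos_increment_of_sign_change by (metis mult.commute)
    then obtain ys where ys: "\<And>i. i \<le> n \<Longrightarrow> ys i \<in> {xs i<..<d i} \<and> 0 < F (xs i) * K (ys i)"
      by metis
    show ?thesis
    proof (intro exI alternating_points_move[OF W])
      show "a < ys i \<and> ys i < b" if "i \<le> n" for i using ys[OF that] d[OF that] rng[OF that] by auto
      show "ys i < ys (Suc i)" if "i < n" for i using ys[of i] ys[of "Suc i"] that by (auto simp: d_def)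
      show "sgn (K (ys i)) = sgn (F (xs i))" if "i \<le> n" for i
        using ys[OF that] by (simp add: sgn_eq_of_pos_mult)
    qed
  qed
qed


subsection \<open>Sign changes of primitives and tail integrals\<close>

lemma integral_sign_witness:
  fixes phi H :: "real \<Rightarrow> real" and S :: "real set"
  assumes S: "S \<subseteq> {c..d}"
    and sg: "AE t in lborel. t \<in> S \<longrightarrow> sgn (phi t) = sgn (H t)"
    and pos: "0 < s * (LINT t:S|lborel. phi t)"
  shows "\<exists>t\<in>{c<..<d}. 0 < s * H t"
proof (rule ccontr)
  assume "\<not> ?thesis"
  then have H_nonpos: "\<And>t. c < t \<Longrightarrow> t < d \<Longrightarrow> s * H t \<le> 0" by (auto simp: not_less)
  have "AE t in lborel. 0 \<le> indicator S t * (- (s * phi t))"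
    using sg AE_lborel_singleton[of c] AE_lborel_singleton[of d]
  proof eventually_elim
    case (elim t)
    show ?case
    proof (cases "t \<in> S")
      case True
      then have "c < t" "t < d" using S elim by force+
      then have "sgn (s * H t) \<le> 0" using H_nonpos by (simp only: sgn_le_0_iff)
      then have "sgn (s * phi t) \<le> 0" using elim True by (simp only: sgn_mult)
      then have "s * phi t \<le> 0" by (simp only: sgn_le_0_iff)
      then show ?thesis using True by simp
    qed simp
  qed
  then have "0 \<le> (LINT t|lborel. indicator S t * (- (s * phi t)))"
    by (rule integral_nonneg_AE)
  also have "(LINT t|lborel. indicator S t * (- (s * phi t))) = - (s * (LINT t:S|lborel. phi t))"
  proof -
    have "(LINT t|lborel. indicator S t * (- (s * phi t))) = (LINT t|lborel. - (s * (indicator S t *\<^sub>R phi t)))"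
      by (rule Bochner_Integration.integral_cong) (auto simp: indicator_def)
    then show ?thesis
      by (simp only: Bochner_Integration.integral_minus integral_mult_right_zero set_lebesgue_integral_def)
  qed
  finally show False using pos by simp
qed

lemma set_integral_point: "(LINT t:{c..c}|lborel. phi t) = (0::real)" for c :: real
  unfolding set_lebesgue_integral_def
  by (rule integral_eq_zero_AE)
     (use AE_lborel_singleton[of c] in \<open>eventually_elim, auto simp: indicator_def\<close>)

lemma sign_changes_primitive_le:
  fixes phi H :: "real \<Rightarrow> real"
  assumes int: "set_integrable lborel {a..b} phi"
    and sg: "AE t in lborel. t \<in> {a..b} \<longrightarrow> sgn (phi t) = sgn (H t)"
  shows "sign_changes a b (\<lambda>x. LINT t:{a..x}|lborel. phi t) \<le> sign_changes a b H"
proof (rule sign_changes_le_left_anchored)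
  show "(LINT t:{a..a}|lborel. phi t) = 0" by (rule set_integral_point)
  fix x y s assume xy: "a \<le> x" "x < y" "y < b"
    and pos: "0 < s * ((LINT t:{a..y}|lborel. phi t) - (LINT t:{a..x}|lborel. phi t))"
  have split: "{a..y} = {a..x} \<union> {x<..y}" and "{a..x} \<inter> {x<..y} = {}" using xy by auto
  have "set_integrable lborel {a..x} phi" "set_integrable lborel {x<..y} phi"
    using xy by (auto intro!: set_integrable_subset[OF int])
  then have "(LINT t:{a..y}|lborel. phi t) = (LINT t:{a..x}|lborel. phi t) + (LINT t:{x<..y}|lborel. phi t)"
    unfolding split by (rule set_integral_Un[OF \<open>{a..x} \<inter> {x<..y} = {}\<close>])
  then have "0 < s * (LINT t:{x<..y}|lborel. phi t)" using pos by simp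
  moreover have "AE t in lborel. t \<in> {x<..y} \<longrightarrow> sgn (phi t) = sgn (H t)"
    using sg by eventually_elim (use xy in auto)
  ultimately show "\<exists>t\<in>{x<..<y}. 0 < s * H t"
    by (intro integral_sign_witness[of "{x<..y}"]) auto
qed

lemma sign_changes_tail_le:
  fixes psi K :: "real \<Rightarrow> real"
  assumes int: "set_integrable lborel {a..b} psi"
    and sg: "AE t in lborel. t \<in> {a..b} \<longrightarrow> sgn (psi t) = sgn (K t)"
  shows "sign_changes a b (\<lambda>x. LINT t:{x..b}|lborel. psi t) \<le> sign_changes a b K"
proof (rule sign_changes_le_right_anchored)
  show "(LINT t:{b..b}|lborel. psi t) = 0" by (rule set_integral_point)
  fix x y s assume xy: "a < x" "x < y" "y \<le> b"
    and pos: "0 < s * ((LINT t:{x..b}|lborel. psi t) - (LINT t:{y..b}|lborel. psi t))"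
  have split: "{x..b} = {x..<y} \<union> {y..b}" and "{x..<y} \<inter> {y..b} = {}" using xy by auto
  have "set_integrable lborel {x..<y} psi" "set_integrable lborel {y..b} psi"
    using xy by (auto intro!: set_integrable_subset[OF int])
  then have "(LINT t:{x..b}|lborel. psi t) = (LINT t:{x..<y}|lborel. psi t) + (LINT t:{y..b}|lborel. psi t)"
    unfolding split by (rule set_integral_Un[OF \<open>{x..<y} \<inter> {y..b} = {}\<close>])
  then have "0 < s * (LINT t:{x..<y}|lborel. psi t)" using pos by simp
  moreover have "AE t in lborel. t \<in> {x..<y} \<longrightarrow> sgn (psi t) = sgn (K t)"
    using sg by eventually_elim (use xy in auto)
  ultimately show "\<exists>t\<in>{x<..<y}. 0 < s * K t"
    by (intro integral_sign_witness[of "{x..<y}"]) auto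
qed

lemma set_borel_measurable_iff_restrict:
  fixes f :: "real \<Rightarrow> real"
  shows "set_borel_measurable lborel {a..b} f \<longleftrightarrow> f \<in> borel_measurable (restrict_space lborel {a..b})"
  unfolding set_borel_measurable_def
  by (rule borel_measurable_restrict_space_iff[symmetric]) simp

lemma continuous_on_borel_measurable_restrict:
  fixes f :: "real \<Rightarrow> real"
  assumes "continuous_on {a..b} f"
  shows "f \<in> borel_measurable (restrict_space lborel {a..b})"
proof -
  have "f \<in> borel_measurable (restrict_space borel {a..b})"
    by (rule borel_measurable_continuous_on_restrict[OF assms])
  then show ?thesis
    by (subst measurable_cong_sets[OF sets_restrict_space_cong[OF sets_lborel] refl])
qed

lemma continuous_on_primitive:
  fixes phi :: "real \<Rightarrow> real"
  assumes int: "set_integrable lborel {a..b} phi"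
  shows "continuous_on {a..b} (\<lambda>x. LINT t:{a..x}|lborel. phi t)"
proof -
  have "continuous_on {a..b} (\<lambda>x. integral {a..x} phi)"
    using indefinite_integral_continuous_1 set_borel_integral_eq_integral(1)[OF int] .
  moreover have "(LINT t:{a..x}|lborel. phi t) = integral {a..x} phi" if "x \<in> {a..b}" for x
    using that by (intro set_borel_integral_eq_integral(2) set_integrable_subset[OF int]) auto
  ultimately show ?thesis using continuous_on_cong by (metis (no_types, lifting))
qed

lemma continuous_on_tail:
  fixes phi :: "real \<Rightarrow> real"
  assumes int: "set_integrable lborel {a..b} phi"
  shows "continuous_on {a..b} (\<lambda>x. LINT t:{x..b}|lborel. phi t)"
proof -
  have "continuous_on {a..b} (\<lambda>x. integral {x..b} phi)"
    using indefinite_integral_continuous_1' set_borel_integral_eq_integral(1)[OF int] .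
  moreover have "(LINT t:{x..b}|lborel. phi t) = integral {x..b} phi" if "x \<in> {a..b}" for x
    using that by (intro set_borel_integral_eq_integral(2) set_integrable_subset[OF int]) auto
  ultimately show ?thesis using continuous_on_cong by (metis (no_types, lifting))
qed

lemma abs_primitive_le:
  fixes phi :: "real \<Rightarrow> real"
  assumes int: "set_integrable lborel {a..b} phi" and x: "x \<in> {a..b}"
  shows "\<bar>LINT t:{a..x}|lborel. phi t\<bar> \<le> (LINT t:{a..b}|lborel. \<bar>phi t\<bar>)"
proof -
  have int_x: "set_integrable lborel {a..x} phi"
    by (rule set_integrable_subset[OF int]) (use x in auto)
  have "\<bar>LINT t:{a..x}|lborel. phi t\<bar> \<le> (LINT t:{a..x}|lborel. \<bar>phi t\<bar>)"
    using set_integral_norm_bound[OF int_x] by simp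
  also have "\<dots> \<le> (LINT t:{a..b}|lborel. \<bar>phi t\<bar>)"
    unfolding set_lebesgue_integral_def
  proof (rule integral_mono)
    show "integrable lborel (\<lambda>t. indicat_real {a..x} t *\<^sub>R \<bar>phi t\<bar>)"
      using set_integrable_abs[OF int_x] by (simp add: set_integrable_def)
    show "integrable lborel (\<lambda>t. indicat_real {a..b} t *\<^sub>R \<bar>phi t\<bar>)"
      using set_integrable_abs[OF int] by (simp add: set_integrable_def)
    show "indicat_real {a..x} t *\<^sub>R \<bar>phi t\<bar> \<le> indicat_real {a..b} t *\<^sub>R \<bar>phi t\<bar>" for t
      using x by (auto simp: indicator_def)
  qed
  finally show ?thesis .
qed

text \<open>This is the
  duality between \<open>T\<close> and \<open>T\<^sup>*\<close> used for the energy identity.\<close>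
lemma fubini_half_plane:
  fixes phi psi :: "real \<Rightarrow> real"
  assumes phi: "integrable lborel phi" and psi: "integrable lborel psi"
  shows "(LINT x|lborel. phi x * (LINT y|lborel. of_bool (x \<le> y) * psi y))
       = (LINT y|lborel. psi y * (LINT x|lborel. of_bool (x \<le> y) * phi x))"
proof -
  have [measurable]: "phi \<in> borel_measurable lborel" "psi \<in> borel_measurable lborel"
    using phi psi by auto
  define k where "k x y = (if x \<le> y then phi x * psi y else 0)" for x y :: real
  have [measurable]: "case_prod k \<in> borel_measurable (lborel \<Otimes>\<^sub>M lborel)"
    unfolding k_def by measurable
  have abs_psi: "integrable lborel (\<lambda>y. \<bar>psi y\<bar>)" using psi by auto
  have k_row: "integrable lborel (\<lambda>y. k x y)" for x
    by (rule Bochner_Integration.integrable_bound[of _ "\<lambda>y. \<bar>phi x\<bar> * \<bar>psi y\<bar>"])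
       (use abs_psi in \<open>auto simp: k_def abs_mult\<close>)
  have row_bound: "norm (LINT y|lborel. norm (k x y)) \<le> norm (\<bar>phi x\<bar> * (LINT y|lborel. \<bar>psi y\<bar>))" for x
  proof -
    have "(LINT y|lborel. norm (k x y)) \<le> (LINT y|lborel. \<bar>phi x\<bar> * \<bar>psi y\<bar>)"
      using k_row abs_psi by (intro integral_mono) (auto simp: k_def abs_mult)
    moreover have "0 \<le> (LINT y|lborel. norm (k x y))" "0 \<le> (LINT y|lborel. \<bar>psi y\<bar>)"
      by (simp_all add: integral_nonneg_AE)
    ultimately show ?thesis by (simp add: abs_mult)
  qed
  have "integrable (lborel \<Otimes>\<^sub>M lborel) (case_prod k)"
  proof (rule lborel_pair.Fubini_integrable)
    show "case_prod k \<in> borel_measurable (lborel \<Otimes>\<^sub>M lborel)" by measurable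
    show "integrable lborel (\<lambda>x. LINT y|lborel. norm (case_prod k (x, y)))"
    proof (rule Bochner_Integration.integrable_bound)
      show "integrable lborel (\<lambda>x. \<bar>phi x\<bar> * (LINT y|lborel. \<bar>psi y\<bar>))"
        using phi by auto
      show "(\<lambda>x. LINT y|lborel. norm (case_prod k (x, y))) \<in> borel_measurable lborel"
        by measurable
      show "AE x in lborel. norm (LINT y|lborel. norm (case_prod k (x, y)))
              \<le> norm (\<bar>phi x\<bar> * (LINT y|lborel. \<bar>psi y\<bar>))"
        using row_bound by simp
    qed
    show "AE x in lborel. integrable lborel (\<lambda>y. case_prod k (x, y))"
      using k_row by simp
  qed
  then have "(LINT y|lborel. LINT x|lborel. k x y) = (LINT x|lborel. LINT y|lborel. k x y)"
    by (intro lborel_pair.Fubini_integral) simp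
  moreover have "(LINT y|lborel. k x y) = phi x * (LINT y|lborel. of_bool (x \<le> y) * psi y)" for x
    by (subst integral_mult_right_zero[symmetric]) (rule Bochner_Integration.integral_cong, auto simp: k_def)
  moreover have "(LINT x|lborel. k x y) = psi y * (LINT x|lborel. of_bool (x \<le> y) * phi x)" for y
    by (subst integral_mult_right_zero[symmetric]) (rule Bochner_Integration.integral_cong, auto simp: k_def)
  ultimately show ?thesis by simp
qed


subsection \<open>The weighted Hardy operator\<close>

definition prim :: "real \<Rightarrow> (real \<Rightarrow> real) \<Rightarrow> (real \<Rightarrow> real) \<Rightarrow> real \<Rightarrow> real" where
  "prim a u f x = (LINT t:{a..x}|lborel. f t * u t)"

text \<open>\<open>dual_density = v (T f)\<^sub>(\<^sub>q\<^sub>)\<close> and its tail integral \<open>dual_tail\<close>, so that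
  \<open>T\<^sup>*((T f)\<^sub>(\<^sub>q\<^sub>)) = u \<cdot> dual_tail\<close>.\<close>
definition dual_density :: "real \<Rightarrow> (real \<Rightarrow> real) \<Rightarrow> (real \<Rightarrow> real) \<Rightarrow> real \<Rightarrow> (real \<Rightarrow> real) \<Rightarrow> real \<Rightarrow> real" where
  "dual_density a u v q f y = v y * spow q (v y * prim a u f y)"

definition dual_tail :: "real \<Rightarrow> real \<Rightarrow> (real \<Rightarrow> real) \<Rightarrow> (real \<Rightarrow> real) \<Rightarrow> real \<Rightarrow> (real \<Rightarrow> real) \<Rightarrow> real \<Rightarrow> real" where
  "dual_tail a b u v q f x = (LINT y:{x..b}|lborel. dual_density a u v q f y)"

lemma Hop_prim: "Hop a u v f x = v x * prim a u f x"
  by (simp add: Hop_def prim_def)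

locale hardy_setting =
  fixes a b p q :: real and u v :: "real \<Rightarrow> real"
  assumes p_gt_1: "1 < p" and q_gt_1: "1 < q"
    and u_pos: "\<forall>x\<in>{a..b}. 0 < u x" and v_pos: "\<forall>x\<in>{a..b}. 0 < v x"
    and u_Lp': "in_Lp (p / (p - 1)) a b u" and v_Lq: "in_Lp q a b v"
begin

lemma u_measurable [measurable]: "u \<in> borel_measurable (restrict_space lborel {a..b})"
  using u_Lp' by (simp add: in_Lp_def set_borel_measurable_iff_restrict)

lemma v_measurable [measurable]: "v \<in> borel_measurable (restrict_space lborel {a..b})"
  using v_Lq by (simp add: in_Lp_def set_borel_measurable_iff_restrict)

text \<open>\<open>f u \<in> L\<^sub>1\<close> for \<open>f \<in> L\<^sub>p\<close>, since \<open>u \<in> L\<^sub>p\<^sub>'\<close>.\<close>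
lemma fu_integrable:
  assumes f: "in_Lp p a b f"
  shows "set_integrable lborel {a..b} (\<lambda>t. f t * u t)"
proof (rule set_integrable_bound)
  have [measurable]: "f \<in> borel_measurable (restrict_space lborel {a..b})"
    using f by (simp add: in_Lp_def set_borel_measurable_iff_restrict)
  show "set_integrable lborel {a..b} (\<lambda>t. \<bar>f t\<bar> powr p + \<bar>u t\<bar> powr (p / (p - 1)))"
    using f u_Lp' by (intro set_integral_add(1)) (auto simp: in_Lp_def)
  show "set_borel_measurable lborel {a..b} (\<lambda>t. f t * u t)"
    unfolding set_borel_measurable_iff_restrict by measurable
  show "AE x in lborel. x \<in> {a..b} \<longrightarrow> norm (f x * u x) \<le> norm (\<bar>f x\<bar> powr p + \<bar>u x\<bar> powr (p / (p - 1)))"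
    using young_crude[OF p_gt_1] by auto
qed

lemma prim_measurable [measurable]:
  "in_Lp p a b f \<Longrightarrow> prim a u f \<in> borel_measurable (restrict_space lborel {a..b})"
  unfolding prim_def[abs_def]
  by (intro continuous_on_borel_measurable_restrict continuous_on_primitive fu_integrable)

text \<open>\<open>v (T f)\<^sub>(\<^sub>q\<^sub>) \<in> L\<^sub>1\<close>: \<open>prim a u f\<close> is bounded and \<open>v \<in> L\<^sub>q\<close>.\<close>
lemma dual_density_integrable:
  assumes f: "in_Lp p a b f"
  shows "set_integrable lborel {a..b} (dual_density a u v q f)"
proof (rule set_integrable_bound)
  define C where "C = (LINT t:{a..b}|lborel. \<bar>f t * u t\<bar>)"
  have [measurable]: "prim a u f \<in> borel_measurable (restrict_space lborel {a..b})"
    using f by (rule prim_measurable)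
  show "set_integrable lborel {a..b} (\<lambda>t. C powr (q - 1) * \<bar>v t\<bar> powr q)"
    using v_Lq by (intro set_integrable_mult_right) (auto simp: in_Lp_def)
  show "set_borel_measurable lborel {a..b} (dual_density a u v q f)"
    unfolding set_borel_measurable_iff_restrict dual_density_def[abs_def] by measurable
  show "AE x in lborel. x \<in> {a..b} \<longrightarrow>
          norm (dual_density a u v q f x) \<le> norm (C powr (q - 1) * \<bar>v x\<bar> powr q)"
  proof (rule AE_I2, intro impI)
    fix x assume x: "x \<in> {a..b}"
    have V: "0 < v x" using v_pos x by auto
    have F: "\<bar>prim a u f x\<bar> \<le> C"
      unfolding prim_def C_def by (rule abs_primitive_le[OF fu_integrable[OF f] x])
    have "\<bar>dual_density a u v q f x\<bar> = v x powr q * \<bar>prim a u f x\<bar> powr (q - 1)"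
      using V by (simp add: dual_density_def abs_spow abs_mult powr_mult powr_diff field_simps)
    also have "\<dots> \<le> v x powr q * C powr (q - 1)"
      using F q_gt_1 by (intro mult_left_mono powr_mono2) auto
    finally show "norm (dual_density a u v q f x) \<le> norm (C powr (q - 1) * \<bar>v x\<bar> powr q)"
      using V by (simp add: mult.commute)
  qed
qed

lemma dual_tail_measurable [measurable]:
  "in_Lp p a b f \<Longrightarrow> dual_tail a b u v q f \<in> borel_measurable (restrict_space lborel {a..b})"
  unfolding dual_tail_def[abs_def]
  by (intro continuous_on_borel_measurable_restrict continuous_on_tail dual_density_integrable)

lemma spectral_relation:
  assumes st: "spectral_triple a b u v p q g f lam"
  shows "AE x in lborel. x \<in> {a..b} \<longrightarrow> spow p (f x) = lam * (u x * dual_tail a b u v q f x)"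
proof -
  have g: "\<forall>x\<in>{a..b}. g x = Hop a u v f x" using st by (simp add: spectral_triple_def)
  have "(LINT y:{x..b}|lborel. v y * spow q (g y)) = dual_tail a b u v q f x" if "x \<in> {a..b}" for x
    unfolding dual_tail_def
    by (rule set_lebesgue_integral_cong) (use that g in \<open>auto simp: dual_density_def Hop_prim\<close>)
  then show ?thesis
    using st unfolding spectral_triple_def Hadj_def by (auto elim!: AE_mp)
qed

lemma dual_pairing:
  assumes f: "in_Lp p a b f"
  shows "(LINT x:{a..b}|lborel. f x * u x * dual_tail a b u v q f x)
       = (LINT y:{a..b}|lborel. \<bar>Hop a u v f y\<bar> powr q)"
proof -
  define phi where "phi x = indicator {a..b} x * (f x * u x)" for x
  define psi where "psi y = indicator {a..b} y * dual_density a u v q f y" for y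
  have "integrable lborel phi" "integrable lborel psi"
    using fu_integrable[OF f] dual_density_integrable[OF f]
    unfolding set_integrable_def phi_def psi_def by simp_all
  note fubini = fubini_half_plane[OF this]
  have "phi x * (LINT y|lborel. of_bool (x \<le> y) * psi y)
        = indicator {a..b} x * (f x * u x * dual_tail a b u v q f x)" for x
  proof (cases "x \<in> {a..b}")
    case True
    have "(LINT y|lborel. of_bool (x \<le> y) * psi y) = dual_tail a b u v q f x"
      unfolding dual_tail_def set_lebesgue_integral_def psi_def
      by (rule Bochner_Integration.integral_cong) (use True in \<open>auto simp: indicator_def\<close>)
    then show ?thesis using True by (simp add: phi_def)
  qed (simp add: phi_def)
  moreover have "psi y * (LINT x|lborel. of_bool (x \<le> y) * phi x)
        = indicator {a..b} y * \<bar>Hop a u v f y\<bar> powr q" for y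
  proof (cases "y \<in> {a..b}")
    case True
    have "(LINT x|lborel. of_bool (x \<le> y) * phi x) = prim a u f y"
      unfolding prim_def set_lebesgue_integral_def phi_def
      by (rule Bochner_Integration.integral_cong) (use True in \<open>auto simp: indicator_def\<close>)
    moreover have "dual_density a u v q f y * prim a u f y = \<bar>Hop a u v f y\<bar> powr q"
      using spow_mult_self[OF q_gt_1, of "v y * prim a u f y"]
      by (simp add: dual_density_def Hop_prim algebra_simps)
    ultimately show ?thesis using True by (simp add: psi_def)
  qed (simp add: psi_def)
  ultimately show ?thesis
    using fubini by (simp add: set_lebesgue_integral_def)
qed

text \<open>Energy identity \<open>\<parallel>f\<parallel>\<^sub>p\<^sup>p = \<lambda> \<parallel>T f\<parallel>\<^sub>q\<^sup>q\<close> for a spectral triple: multiply the spectral relation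
  by \<open>f\<close> and integrate.\<close>
lemma spectral_energy:
  assumes st: "spectral_triple a b u v p q g f lam"
  shows "(LINT x:{a..b}|lborel. \<bar>f x\<bar> powr p) = lam * (LINT y:{a..b}|lborel. \<bar>Hop a u v f y\<bar> powr q)"
proof -
  have f: "in_Lp p a b f" using st by (simp add: spectral_triple_def)
  have [measurable]: "f \<in> borel_measurable (restrict_space lborel {a..b})"
    using f by (simp add: in_Lp_def set_borel_measurable_iff_restrict)
  have "set_borel_measurable lborel {a..b} (\<lambda>x. \<bar>f x\<bar> powr p)"
    and "set_borel_measurable lborel {a..b} (\<lambda>x. lam * (f x * u x * dual_tail a b u v q f x))"
    using f unfolding set_borel_measurable_iff_restrict by measurable
  then have "(LINT x:{a..b}|lborel. \<bar>f x\<bar> powr p)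
      = (LINT x:{a..b}|lborel. lam * (f x * u x * dual_tail a b u v q f x))"
    unfolding set_lebesgue_integral_def set_borel_measurable_def
  proof (rule integral_cong_AE)
    show "AE x in lborel. indicat_real {a..b} x *\<^sub>R \<bar>f x\<bar> powr p
        = indicat_real {a..b} x *\<^sub>R (lam * (f x * u x * dual_tail a b u v q f x))"
      using spectral_relation[OF st]
    proof eventually_elim
      case (elim x)
      then show ?case
        using spow_mult_self[OF p_gt_1, of "f x"] by (auto simp: indicator_def algebra_simps)
    qed
  qed
  also have "\<dots> = lam * (LINT y:{a..b}|lborel. \<bar>Hop a u v f y\<bar> powr q)"
    by (simp add: dual_pairing[OF f])
  finally show ?thesis .
qed

text \<open>The eigenvalue of a spectral triple is positive, since \<open>\<parallel>f\<parallel>\<^sub>p = 1\<close>.\<close>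
lemma spectral_value_pos:
  assumes st: "spectral_triple a b u v p q g f lam"
  shows "0 < lam"
proof -
  define I where "I = (LINT x:{a..b}|lborel. \<bar>f x\<bar> powr p)"
  have "I powr (1 / p) = 1" using st by (simp add: spectral_triple_def Lp_norm_def I_def)
  moreover have "0 \<le> I"
    unfolding I_def set_lebesgue_integral_def by (rule integral_nonneg_AE) auto
  ultimately have "I = 1"
  proof -
    assume norm: "I powr (1 / p) = 1" and "0 \<le> I"
    then have "I \<noteq> 0" by auto
    then have "I = (I powr (1 / p)) powr p" using \<open>0 \<le> I\<close> p_gt_1 by (simp add: powr_powr)
    then show ?thesis using norm by simp
  qed
  moreover have "0 \<le> (LINT y:{a..b}|lborel. \<bar>Hop a u v f y\<bar> powr q)"
    unfolding set_lebesgue_integral_def by (rule integral_nonneg_AE) auto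
  ultimately show ?thesis
    using spectral_energy[OF st] unfolding I_def
    by (metis less_numeral_extra(1) mult_nonpos_nonneg not_le)
qed

lemma sign_changes_T_le_dual:
  assumes st1: "spectral_triple a b u v p q g1 f1 lam1"
    and st2: "spectral_triple a b u v p q g2 f2 lam2"
    and eps: "0 < eps"
  shows "sign_changes a b (\<lambda>x. Hop a u v f1 x - eps * Hop a u v f2 x)
       \<le> sign_changes a b (\<lambda>x. lam1 * dual_tail a b u v q f1 x - eps powr (p - 1) * lam2 * dual_tail a b u v q f2 x)"
proof -
  have f1: "in_Lp p a b f1" and f2: "in_Lp p a b f2"
    using st1 st2 by (simp_all add: spectral_triple_def)
  define phi where "phi t = f1 t * u t - eps * (f2 t * u t)" for t
  have phi_int: "set_integrable lborel {a..b} phi"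
    unfolding phi_def using fu_integrable[OF f1] fu_integrable[OF f2] by auto
  have "Hop a u v f1 x - eps * Hop a u v f2 x = v x * (LINT t:{a..x}|lborel. phi t)"
    if "x \<in> {a..b}" for x
  proof -
    have "{a..x} \<subseteq> {a..b}" using that by auto
    then show ?thesis
      using set_integrable_subset[OF fu_integrable[OF f1]] set_integrable_subset[OF fu_integrable[OF f2]]
      by (simp add: Hop_prim prim_def phi_def set_integral_diff set_integral_mult_right algebra_simps)
  qed
  then have "sign_changes a b (\<lambda>x. Hop a u v f1 x - eps * Hop a u v f2 x)
           = sign_changes a b (\<lambda>x. LINT t:{a..x}|lborel. phi t)"
    using v_pos by (intro sign_changes_sgn_cong) (auto simp: sgn_mult)
  also have "\<dots> \<le> sign_changes a b (\<lambda>x. lam1 * dual_tail a b u v q f1 x - eps powr (p - 1) * lam2 * dual_tail a b u v q f2 x)"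
  proof (rule sign_changes_primitive_le[OF phi_int])
    show "AE t in lborel. t \<in> {a..b} \<longrightarrow>
        sgn (phi t) = sgn (lam1 * dual_tail a b u v q f1 t - eps powr (p - 1) * lam2 * dual_tail a b u v q f2 t)"
      using spectral_relation[OF st1] spectral_relation[OF st2]
      by eventually_elim
         (use u_pos in \<open>auto simp: phi_def intro!: sgn_spectral_difference[OF _ eps p_gt_1]\<close>)
  qed
  finally show ?thesis .
qed

lemma sign_changes_dual_le_T:
  assumes f1: "in_Lp p a b f1" and f2: "in_Lp p a b f2"
    and lam1: "0 < lam1" and c: "0 < c"
  shows "sign_changes a b (\<lambda>x. lam1 * dual_tail a b u v q f1 x - c * dual_tail a b u v q f2 x)
       \<le> sign_changes a b (\<lambda>x. Hop a u v f1 x - (c / lam1) powr (1 / (q - 1)) * Hop a u v f2 x)"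
proof -
  define psi where "psi t = lam1 * dual_density a u v q f1 t - c * dual_density a u v q f2 t" for t
  have psi_int: "set_integrable lborel {a..b} psi"
    unfolding psi_def using dual_density_integrable[OF f1] dual_density_integrable[OF f2] by auto
  have "lam1 * dual_tail a b u v q f1 x - c * dual_tail a b u v q f2 x = (LINT t:{x..b}|lborel. psi t)"
    if "x \<in> {a..b}" for x
  proof -
    have "{x..b} \<subseteq> {a..b}" using that by auto
    then show ?thesis
      using set_integrable_subset[OF dual_density_integrable[OF f1]]
        set_integrable_subset[OF dual_density_integrable[OF f2]]
      by (simp add: dual_tail_def psi_def set_integral_diff set_integral_mult_right)
  qed
  then have "sign_changes a b (\<lambda>x. lam1 * dual_tail a b u v q f1 x - c * dual_tail a b u v q f2 x)
           = sign_changes a b (\<lambda>x. LINT t:{x..b}|lborel. psi t)"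
    by (intro sign_changes_sgn_cong) auto
  also have "\<dots> \<le> sign_changes a b (\<lambda>x. Hop a u v f1 x - (c / lam1) powr (1 / (q - 1)) * Hop a u v f2 x)"
  proof (rule sign_changes_tail_le[OF psi_int])
    show "AE t in lborel. t \<in> {a..b} \<longrightarrow>
        sgn (psi t) = sgn (Hop a u v f1 t - (c / lam1) powr (1 / (q - 1)) * Hop a u v f2 t)"
      using v_pos
      by (auto simp: psi_def dual_density_def Hop_prim intro!: sgn_dual_difference[OF _ lam1 c q_gt_1])
  qed
  finally show ?thesis .
qed

end

theorem mainTheorem2:
  fixes a b p q :: real and u v :: "real \<Rightarrow> real"
    and g1 f1 g2 f2 :: "real \<Rightarrow> real" and lam1 lam2 eps :: real
  assumes ab: "a < b"
    and p: "1 < p" and q: "1 < q"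
    and u_pos: "\<forall>x\<in>{a..b}. 0 < u x" and v_pos: "\<forall>x\<in>{a..b}. 0 < v x"
    and u_L: "in_Lp (p / (p - 1)) a b u" and v_L: "in_Lp q a b v"
    and st1: "spectral_triple a b u v p q g1 f1 lam1"
    and st2: "spectral_triple a b u v p q g2 f2 lam2"
    and eps: "0 < eps"
  shows "sign_changes a b (\<lambda>x. Hop a u v f1 x - eps * Hop a u v f2 x)
       \<le> sign_changes a b (\<lambda>x. Hop a u v f1 x
            - eps powr ((p - 1) / (q - 1)) * (lam2 / lam1) powr (1 / (q - 1)) * Hop a u v f2 x)"
proof -
  interpret hardy_setting a b p q u v
    using p q u_pos v_pos u_L v_L by unfold_locales
  have lam1: "0 < lam1" and lam2: "0 < lam2"
    using spectral_value_pos[OF st1] spectral_value_pos[OF st2] .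
  have f1: "in_Lp p a b f1" and f2: "in_Lp p a b f2"
    using st1 st2 by (simp_all add: spectral_triple_def)
  define c where "c = eps powr (p - 1) * lam2"
  have c: "0 < c" using eps lam2 by (simp add: c_def)
  have "(c / lam1) powr (1 / (q - 1)) = (eps powr (p - 1)) powr (1 / (q - 1)) * (lam2 / lam1) powr (1 / (q - 1))"
    using eps lam1 lam2 by (simp add: c_def powr_mult[symmetric] mult.assoc)
  also have "\<dots> = eps powr ((p - 1) / (q - 1)) * (lam2 / lam1) powr (1 / (q - 1))"
    by (simp add: powr_powr)
  finally have exponent: "(c / lam1) powr (1 / (q - 1))
      = eps powr ((p - 1) / (q - 1)) * (lam2 / lam1) powr (1 / (q - 1))" .
  have "sign_changes a b (\<lambda>x. Hop a u v f1 x - eps * Hop a u v f2 x)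
      \<le> sign_changes a b (\<lambda>x. lam1 * dual_tail a b u v q f1 x - c * dual_tail a b u v q f2 x)"
    using sign_changes_T_le_dual[OF st1 st2 eps] by (simp add: c_def mult.assoc)
  also have "\<dots> \<le> sign_changes a b (\<lambda>x. Hop a u v f1 x - (c / lam1) powr (1 / (q - 1)) * Hop a u v f2 x)"
    by (rule sign_changes_dual_le_T[OF f1 f2 lam1 c])
  finally show ?thesis by (simp add: exponent)
qed

end
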